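(* Let $\mu$ be a positive finite Borel measure on $\overline{\mathbb D}$ and $f\in\mathcal D_\mu$, $f(z)=\sum_{k=0}^\infty a_kz^k$. Let $\sigma_n(f)(z):=\sum_{k=0}^n\bigl(1-\frac{k}{n+1}\bigr)a_kz^k$. Then $\|\sigma_n(f)-f\|_{\mathcal D_\mu}\to0$ as $n\to\infty$.
   Context: $\mathbb D$ is the open unit disk, $\mathrm{Hol}(\mathbb D)$ the holomorphic functions on $\mathbb D$, and $H^2$ the Hardy space with $\|\sum b_kz^k\|_{H^2}^2=\sum|b_k|^2$. For $\zeta\in\overline{\mathbb D}$, $\mathcal D_\zeta$ is the set of $f\in\mathrm{Hol}(\mathbb D)$ of the form $f(z)=a+(z-\zeta)g(z)$ with $g\in H^2$, $a\in\mathbb C$; for such $f$ set $\mathcal D_\zeta(f):=\|g\|_{H^2}^2$, and set $\mathcal D_\zeta(f):=\infty$ if $f\notin\mathcal D_\zeta$. For a positive finite Borel measure $\mu$ on $\overline{\mathbb D}$, $\mathcal D_\mu(f):=\int_{\overline{\mathbb D}}\mathcal D_\zeta(f)\,d\mu(\zeta)$, $\mathcal D_\mu$ is the set of $f\in\mathrm{Hol}(\mathbb D)$ with $\mathcal D_\mu(f)<\infty$, normed by $\|f\|_{\mathcal D_\mu}^2:=|f(0)|^2+\mathcal D_\mu(f)$. *)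

theory Defs
  imports "HOL-Complex_Analysis.Complex_Analysis"
begin

definition taylor_coeff :: "(complex \<Rightarrow> complex) \<Rightarrow> nat \<Rightarrow> complex" where
  "taylor_coeff f k = (deriv ^^ k) f 0 / of_nat (fact k)"

definition hardy_norm2 :: "(complex \<Rightarrow> complex) \<Rightarrow> ennreal" where
  "hardy_norm2 g = (\<Sum>k. ennreal ((cmod (taylor_coeff g k))\<^sup>2))"

definition H2 :: "(complex \<Rightarrow> complex) set" where
  "H2 = {g. g holomorphic_on ball 0 1 \<and> hardy_norm2 g < \<infinity>}"

text \<open>Local Dirichlet integral D_zeta(f); the representation f = a + (z - zeta) g with g in H^2
  is unique, so the infimum is the value ||g||^2, and it is \<infinity> (Inf of the empty set) if
  no representation exists.\<close>
definition local_dirichlet :: "complex \<Rightarrow> (complex \<Rightarrow> complex) \<Rightarrow> ennreal" where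
  "local_dirichlet \<zeta> f =
     (INF g \<in> {g \<in> H2. \<exists>a. \<forall>z\<in>ball 0 1. f z = a + (z - \<zeta>) * g z}. hardy_norm2 g)"

definition dirichlet_mu :: "complex measure \<Rightarrow> (complex \<Rightarrow> complex) \<Rightarrow> ennreal" where
  "dirichlet_mu \<mu> f = (\<integral>\<^sup>+ \<zeta>. local_dirichlet \<zeta> f \<partial>\<mu>)"

definition Dmu_norm2 :: "complex measure \<Rightarrow> (complex \<Rightarrow> complex) \<Rightarrow> ennreal" where
  "Dmu_norm2 \<mu> f = ennreal ((cmod (f 0))\<^sup>2) + dirichlet_mu \<mu> f"

definition fejer_mean :: "nat \<Rightarrow> (complex \<Rightarrow> complex) \<Rightarrow> complex \<Rightarrow> complex" where
  "fejer_mean n f z = (\<Sum>k\<le>n. (1 - of_nat k / of_nat (n + 1)) * taylor_coeff f k * z ^ k)"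

end

theory Submission
  imports Defs
begin

(* Fix \<zeta> in the closed disc and write f = a + (z - \<zeta>) g with g = \<Sum> b\<^sub>j z\<^sup>j in H\<^sup>2.
   Synthetic division by z - \<zeta> gives \<sigma>\<^sub>n f = c + (z - \<zeta>) Q\<^sub>n for an explicit polynomial Q\<^sub>n,
   and bounding its coefficients by Cauchy-Schwarz yields
   \<parallel>Q\<^sub>n - g\<parallel>\<^sup>2 \<le> \<Sum> w\<^sub>n\<^sub>j |b\<^sub>j|\<^sup>2 with weights w\<^sub>n\<^sub>j \<le> 4 that tend to 0 as n \<rightarrow> \<infinity>.
   Hence D\<^sub>\<zeta>(\<sigma>\<^sub>n f - f) \<le> 4 D\<^sub>\<zeta>(f), and D\<^sub>\<zeta>(\<sigma>\<^sub>n f - f) \<rightarrow> 0 wherever D\<^sub>\<zeta>(f) < \<infinity>, so dominated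
   convergence in \<zeta> concludes. Since \<zeta> \<mapsto> D\<^sub>\<zeta>(f) need not be measurable, dominated convergence
   is proved for the lower integral of arbitrary nonnegative functions. *)

lemma nn_integral_cmult_le:
  fixes c :: ennreal
  assumes "c \<noteq> \<infinity>"
  shows "(\<integral>\<^sup>+x. c * f x \<partial>M) \<le> c * (\<integral>\<^sup>+x. f x \<partial>M)"
proof (cases "c = 0")
  case False
  show ?thesis
    unfolding nn_integral_def
  proof (rule SUP_least)
    fix g assume "g \<in> {g. simple_function M g \<and> g \<le> (\<lambda>x. c * f x)}"
    then have g: "simple_function M g" "\<And>x. g x \<le> c * f x" by (auto simp: le_fun_def)
    define h where "h x = g x / c" for x
    have h: "simple_function M h"
      unfolding h_def by (rule simple_function_compose1[OF g(1)])
    have "h \<le> f"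
      unfolding le_fun_def h_def using g(2) False assms
      by (metis divide_right_mono_ennreal ennreal_mult_divide_eq infinity_ennreal_def mult.commute)
    have "integral\<^sup>S M g = integral\<^sup>S M (\<lambda>x. c * h x)"
      unfolding h_def using False assms by (simp add: ennreal_times_divide mult.commute[of c] ennreal_mult_divide_eq)
    also have "\<dots> = c * integral\<^sup>S M h" using h by simp
    also have "\<dots> \<le> c * (SUP g \<in> {g. simple_function M g \<and> g \<le> f}. integral\<^sup>S M g)"
      using h \<open>h \<le> f\<close> by (intro mult_left_mono SUP_upper) auto
    finally show "integral\<^sup>S M g \<le> c * (SUP g \<in> {g. simple_function M g \<and> g \<le> f}. integral\<^sup>S M g)" .
  qed
qed simp

lemma nn_integral_approx_simple:
  assumes "integral\<^sup>N M f \<noteq> \<infinity>" "0 < e"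
  obtains s where "simple_function M s" "s \<le> f" "integral\<^sup>N M f < integral\<^sup>N M s + ennreal e"
proof -
  have "\<exists>s \<in> {s. simple_function M s \<and> s \<le> f}. integral\<^sup>N M f < integral\<^sup>S M s + ennreal e"
    using assms by (intro SUP_approx_ennreal)
      (auto simp: nn_integral_def le_fun_def intro!: exI[of _ "\<lambda>x. 0"])
  then show ?thesis
    using that by (auto simp: nn_integral_eq_simple_integral)
qed

lemma emeasure_eq_0_if_nn_integral_finite:
  assumes "integral\<^sup>N M f < \<infinity>" "A \<in> sets M" "\<And>x. x \<in> A \<Longrightarrow> f x = \<infinity>"
  shows "emeasure M A = 0"
proof -
  have "(\<integral>\<^sup>+x. \<infinity> * indicator A x \<partial>M) \<le> integral\<^sup>N M f"
    using assms(3) by (intro nn_integral_mono) (auto split: split_indicator)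
  then have "\<infinity> * emeasure M A < \<infinity>"
    using assms(1,2) by (simp add: nn_integral_cmult_indicator)
  then show ?thesis
    by (auto simp: ennreal_mult_less_top)
qed

lemma nn_integral_dominated_convergence_0_measurable:
  fixes \<phi> :: "'a \<Rightarrow> ennreal" and u :: "nat \<Rightarrow> 'a \<Rightarrow> ennreal"
  assumes [measurable]: "\<And>n. u n \<in> borel_measurable M"
    and fin: "integral\<^sup>N M \<phi> < \<infinity>"
    and le: "\<And>n x. x \<in> space M \<Longrightarrow> u n x \<le> \<phi> x"
    and lim: "\<And>x. x \<in> space M \<Longrightarrow> \<phi> x < \<infinity> \<Longrightarrow> (\<lambda>n. u n x) \<longlonglongrightarrow> 0"
  shows "(\<lambda>n. integral\<^sup>N M (u n)) \<longlonglongrightarrow> 0"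
proof -
  define L where "L x = limsup (\<lambda>n. u n x)" for x
  have "(SUP n. u n x) \<le> \<phi> x" if "x \<in> space M" for x
    using le[OF that] by (intro SUP_least)
  then have "(\<integral>\<^sup>+x. (SUP n. u n x) \<partial>M) < \<infinity>"
    using fin by (blast intro: le_less_trans nn_integral_mono)
  then have "limsup (\<lambda>n. integral\<^sup>N M (u n)) \<le> integral\<^sup>N M L"
    unfolding L_def by (intro nn_integral_limsup[where w="\<lambda>x. SUP n. u n x"]) (auto intro!: SUP_upper)
  \<comment> \<open>\<open>L\<close> vanishes wherever \<open>\<phi>\<close> is finite, hence almost everywhere as \<open>\<phi>\<close> is integrable.\<close>
  also have "integral\<^sup>N M L = 0"
  proof -
    have L0: "L x = 0" if "x \<in> space M" "\<phi> x < \<infinity>" for x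
      unfolding L_def using lim[OF that] by (simp add: lim_imp_Limsup)
    have "emeasure M {x \<in> space M. L x \<noteq> 0} = 0"
    proof (rule emeasure_eq_0_if_nn_integral_finite[OF fin])
      show "{x \<in> space M. L x \<noteq> 0} \<in> sets M"
        unfolding L_def by measurable
    qed (use L0 in \<open>auto simp flip: less_top\<close>)
    then have "AE x in M. L x = 0"
      by (intro AE_I[of _ _ "{x \<in> space M. L x \<noteq> 0}"]) (auto simp: L_def)
    then show ?thesis
      by (simp add: nn_integral_cong_AE)
  qed
  finally show ?thesis
    by (intro tendsto_0_if_Limsup_eq_0_ennreal) simp
qed

lemma nn_integral_dominated_convergence_0_nonmeasurable:
  fixes \<phi> :: "'a \<Rightarrow> ennreal" and \<psi> :: "nat \<Rightarrow> 'a \<Rightarrow> ennreal"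
  assumes fin: "integral\<^sup>N M \<phi> < \<infinity>"
    and le: "\<And>n x. x \<in> space M \<Longrightarrow> \<psi> n x \<le> \<phi> x"
    and lim: "\<And>x. x \<in> space M \<Longrightarrow> \<phi> x < \<infinity> \<Longrightarrow> (\<lambda>n. \<psi> n x) \<longlonglongrightarrow> 0"
  shows "(\<lambda>n. integral\<^sup>N M (\<psi> n)) \<longlonglongrightarrow> 0"
proof -
  have "integral\<^sup>N M (\<psi> n) \<le> integral\<^sup>N M \<phi>" for n
    using le by (intro nn_integral_mono)
  then have "integral\<^sup>N M (\<psi> n) \<noteq> \<infinity>" for n
    using fin by (metis leD)
  then have "\<forall>n. \<exists>s. simple_function M s \<and> s \<le> \<psi> n \<and>
      integral\<^sup>N M (\<psi> n) < integral\<^sup>N M s + ennreal (1 / Suc n)"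
    by (metis nn_integral_approx_simple of_nat_0_less_iff zero_less_Suc zero_less_divide_1_iff)
  then obtain s where s: "\<And>n. simple_function M (s n)" "\<And>n. s n \<le> \<psi> n"
    and approx: "\<And>n. integral\<^sup>N M (\<psi> n) < integral\<^sup>N M (s n) + ennreal (1 / Suc n)"
    by metis
  have "(\<lambda>n. integral\<^sup>N M (s n)) \<longlonglongrightarrow> 0"
  proof (rule nn_integral_dominated_convergence_0_measurable[OF _ fin])
    show "s n \<in> borel_measurable M" for n
      using s(1) by (rule borel_measurable_simple_function)
    show "s n x \<le> \<phi> x" if "x \<in> space M" for n x
      using s(2) le[OF that] by (auto simp: le_fun_def intro: order_trans)
    show "(\<lambda>n. s n x) \<longlonglongrightarrow> 0" if "x \<in> space M" "\<phi> x < \<infinity>" for x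
      using s(2) by (intro tendsto_sandwich[OF _ _ tendsto_const lim[OF that]]) (auto simp: le_fun_def)
  qed
  moreover have "(\<lambda>n. ennreal (1 / Suc n)) \<longlonglongrightarrow> 0"
    using tendsto_ennrealI[OF LIMSEQ_Suc[OF lim_inverse_n']] by simp
  ultimately have upper: "(\<lambda>n. integral\<^sup>N M (s n) + ennreal (1 / Suc n)) \<longlonglongrightarrow> 0"
    by (rule tendsto_add_zero)
  show ?thesis
    by (rule tendsto_sandwich[OF _ _ tendsto_const upper])
      (use approx in \<open>auto intro: always_eventually less_imp_le\<close>)
qed

lemma higher_deriv_monomial_at_0:
  "(deriv ^^ k) (\<lambda>w. w ^ j) (0::complex) = (if j = k then fact k else 0)"
proof -
  have "(deriv ^^ k) (\<lambda>w. w ^ j) (0::complex) = pochhammer (of_nat (Suc j - k)) k * 0 ^ (j - k)"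
    using higher_deriv_power[of k 0 j 0] by simp
  then show ?thesis
    by (cases j k rule: linorder_cases) (auto simp: pochhammer_fact pochhammer_0_left)
qed

lemma higher_deriv_polynomial_at_0:
  "(deriv ^^ k) (\<lambda>z. \<Sum>j\<le>N. c j * z ^ j) (0::complex) = (if k \<le> N then c k * fact k else 0)"
proof (induction N)
  case 0
  have "(deriv ^^ k) (\<lambda>z. c 0 * z ^ 0) (0::complex) = c 0 * (deriv ^^ k) (\<lambda>z. z ^ 0) 0"
    by (rule higher_deriv_cmult[where A=UNIV]) auto
  then show ?case
    using higher_deriv_monomial_at_0[of k 0] by auto
next
  case (Suc N)
  have "(deriv ^^ k) (\<lambda>z. (\<Sum>j\<le>N. c j * z ^ j) + c (Suc N) * z ^ Suc N) (0::complex)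
      = (deriv ^^ k) (\<lambda>z. \<Sum>j\<le>N. c j * z ^ j) 0 + (deriv ^^ k) (\<lambda>z. c (Suc N) * z ^ Suc N) 0"
    by (rule higher_deriv_add[where S=UNIV]) (auto intro!: holomorphic_intros)
  moreover have "(deriv ^^ k) (\<lambda>z. c (Suc N) * z ^ Suc N) (0::complex)
      = c (Suc N) * (deriv ^^ k) (\<lambda>z. z ^ Suc N) 0"
    by (rule higher_deriv_cmult[where A=UNIV]) (auto intro!: holomorphic_intros)
  ultimately show ?case
    using Suc higher_deriv_monomial_at_0[of k "Suc N"] by (auto simp: le_Suc_eq)
qed

lemma taylor_coeff_polynomial:
  "taylor_coeff (\<lambda>z. \<Sum>j\<le>N. c j * z ^ j) k = (if k \<le> N then c k else 0)"
  unfolding taylor_coeff_def higher_deriv_polynomial_at_0 by simp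

lemma taylor_coeff_diff:
  assumes "f holomorphic_on ball 0 1" "g holomorphic_on ball 0 1"
  shows "taylor_coeff (\<lambda>z. f z - g z) k = taylor_coeff f k - taylor_coeff g k"
  unfolding taylor_coeff_def higher_deriv_diff[OF assms open_ball, of 0, simplified]
  by (simp add: diff_divide_distrib)

lemma taylor_coeff_linear_factor:
  assumes f: "f holomorphic_on ball 0 1" and g: "g holomorphic_on ball 0 1"
    and eq: "\<forall>z\<in>ball 0 1. f z = a + (z - \<zeta>) * g z"
  shows "taylor_coeff f k = (if k = 0 then a else taylor_coeff g (k - 1)) - \<zeta> * taylor_coeff g k"
proof -
  have "(deriv ^^ k) f 0 = (deriv ^^ k) (\<lambda>z. a + (z - \<zeta>) * g z) 0"
    by (rule higher_deriv_transform_within_open[OF f]) (use g eq in \<open>auto intro!: holomorphic_intros\<close>)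
  also have "\<dots> = (deriv ^^ k) (\<lambda>z. a) 0 + (deriv ^^ k) (\<lambda>z. (z - \<zeta>) * g z) 0"
    by (rule higher_deriv_add[where S="ball 0 1"]) (use g in \<open>auto intro!: holomorphic_intros\<close>)
  also have "(deriv ^^ k) (\<lambda>z. (z - \<zeta>) * g z) 0 =
      (\<Sum>i = 0..k. of_nat (k choose i) * (deriv ^^ i) (\<lambda>z. z - \<zeta>) 0 * (deriv ^^ (k - i)) g 0)"
    by (rule higher_deriv_mult[where S="ball 0 1"]) (use g in \<open>auto intro!: holomorphic_intros\<close>)
  also have "\<dots> = (\<Sum>i = 0..k. (if i = 0 then - \<zeta> * (deriv ^^ k) g 0 else 0)
                 + (if i = 1 then of_nat k * (deriv ^^ (k - 1)) g 0 else 0))"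
  proof (intro sum.cong refl)
    fix i
    have "(deriv ^^ i) (\<lambda>z. z - \<zeta>) 0 = (deriv ^^ i) (\<lambda>z. z) 0 - (deriv ^^ i) (\<lambda>z. \<zeta>) (0::complex)"
      by (rule higher_deriv_diff[where S=UNIV]) auto
    then show "of_nat (k choose i) * (deriv ^^ i) (\<lambda>z. z - \<zeta>) 0 * (deriv ^^ (k - i)) g 0
        = (if i = 0 then - \<zeta> * (deriv ^^ k) g 0 else 0)
          + (if i = 1 then of_nat k * (deriv ^^ (k - 1)) g 0 else 0)"
      by simp
  qed
  finally have D: "(deriv ^^ k) f 0 = (if k = 0 then a else 0) - \<zeta> * (deriv ^^ k) g 0
      + (if 1 \<le> k then of_nat k * (deriv ^^ (k - 1)) g 0 else 0)"
    by (simp add: sum.distrib)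
  show ?thesis
  proof (cases k)
    case 0
    then show ?thesis using D by (simp add: taylor_coeff_def)
  next
    case (Suc m)
    have fact_k: "(of_nat (fact k) :: complex) = of_nat (Suc m) * of_nat (fact m)"
      using Suc by (simp only: fact_Suc of_nat_mult of_nat_id)
    have "taylor_coeff f k
        = (- \<zeta> * (deriv ^^ k) g 0 + of_nat (Suc m) * (deriv ^^ m) g 0) / (of_nat (Suc m) * of_nat (fact m))"
      unfolding taylor_coeff_def fact_k using D Suc by simp
    also have "\<dots> = - \<zeta> * ((deriv ^^ k) g 0 / (of_nat (Suc m) * of_nat (fact m))) + (deriv ^^ m) g 0 / of_nat (fact m)"
      by (simp add: field_simps del: of_nat_Suc)
    finally show ?thesis
      unfolding taylor_coeff_def fact_k using Suc by simp
  qed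
qed

text \<open>If \<open>f = a + (z - \<zeta>) g\<close> and \<open>b\<close> are the Taylor coefficients of \<open>g\<close>, then
  \<open>fejer_mean n f = c + (z - \<zeta>) * fejer_quotient b \<zeta> n\<close> (lemma \<open>fejer_sum_factorization\<close>).\<close>

definition fejer_tail :: "(nat \<Rightarrow> complex) \<Rightarrow> complex \<Rightarrow> nat \<Rightarrow> nat \<Rightarrow> complex" where
  "fejer_tail b \<zeta> n j = (\<Sum>i\<in>{j..n}. b i * \<zeta> ^ (i - j))"

definition fejer_quotient_coeff :: "(nat \<Rightarrow> complex) \<Rightarrow> complex \<Rightarrow> nat \<Rightarrow> nat \<Rightarrow> complex" where
  "fejer_quotient_coeff b \<zeta> n j =
     (1 - of_nat j / of_nat (n + 1)) * b j - fejer_tail b \<zeta> n j / of_nat (n + 1)"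

definition fejer_quotient :: "(nat \<Rightarrow> complex) \<Rightarrow> complex \<Rightarrow> nat \<Rightarrow> complex \<Rightarrow> complex" where
  "fejer_quotient b \<zeta> n z = (\<Sum>j\<le>n. fejer_quotient_coeff b \<zeta> n j * z ^ j)"

lemma fejer_tail_pred:
  assumes "1 \<le> k" "k \<le> n"
  shows "fejer_tail b \<zeta> n (k - 1) = b (k - 1) + \<zeta> * fejer_tail b \<zeta> n k"
proof -
  have "{k - 1..n} = insert (k - 1) {k..n}" using assms by auto
  then have "fejer_tail b \<zeta> n (k - 1) = b (k - 1) + (\<Sum>i\<in>{k..n}. b i * \<zeta> ^ (i - (k - 1)))"
    unfolding fejer_tail_def using assms by simp
  also have "(\<Sum>i\<in>{k..n}. b i * \<zeta> ^ (i - (k - 1))) = \<zeta> * fejer_tail b \<zeta> n k"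
    unfolding fejer_tail_def sum_distrib_left
  proof (intro sum.cong refl)
    fix i assume "i \<in> {k..n}"
    then have "i - (k - 1) = Suc (i - k)" using assms by auto
    then show "b i * \<zeta> ^ (i - (k - 1)) = \<zeta> * (b i * \<zeta> ^ (i - k))" by simp
  qed
  finally show ?thesis .
qed

lemma fejer_quotient_coeff_last: "fejer_quotient_coeff b \<zeta> n n = 0"
proof -
  have "(of_nat (n + 1) :: complex) \<noteq> 0" by (simp del: of_nat_Suc)
  then show ?thesis
    unfolding fejer_quotient_coeff_def fejer_tail_def by (simp add: field_simps)
qed

lemma fejer_quotient_coeff_step:
  assumes "1 \<le> k" "k \<le> n"
  shows "fejer_quotient_coeff b \<zeta> n (k - 1) - \<zeta> * fejer_quotient_coeff b \<zeta> n k
       = (1 - of_nat k / of_nat (n + 1)) * (b (k - 1) - \<zeta> * b k)"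
proof -
  have "(of_nat (n + 1) :: complex) \<noteq> 0" by (simp del: of_nat_Suc)
  moreover have "(of_nat (k - 1) :: complex) = of_nat k - 1" using assms by (simp add: of_nat_diff)
  moreover have "N \<noteq> 0 \<Longrightarrow>
      ((1 - (K - 1) / N) * B1 - (B1 + \<zeta> * S) / N) - \<zeta> * ((1 - K / N) * B2 - S / N)
      = (1 - K / N) * (B1 - \<zeta> * B2)" for N K B1 B2 S :: complex
    by (simp add: field_simps)
  ultimately show ?thesis
    unfolding fejer_quotient_coeff_def fejer_tail_pred[OF assms] by simp
qed

lemma linear_factor_times_sum:
  "((z::complex) - \<zeta>) * (\<Sum>j<Suc N. q j * z ^ j) =
     (\<Sum>k<Suc N. ((if k = 0 then 0 else q (k - 1)) - \<zeta> * q k) * z ^ k) + q N * z ^ Suc N"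
  by (induction N) (simp_all add: algebra_simps)

lemma fejer_sum_factorization:
  assumes A: "\<And>k. A k = (if k = 0 then a else b (k - 1)) - \<zeta> * b k"
  shows "(\<Sum>k\<le>n. (1 - of_nat k / of_nat (n + 1)) * A k * z ^ k) =
         (A 0 + \<zeta> * fejer_quotient_coeff b \<zeta> n 0) + (z - \<zeta>) * fejer_quotient b \<zeta> n z"
proof -
  let ?q = "fejer_quotient_coeff b \<zeta> n"
  have "(z - \<zeta>) * fejer_quotient b \<zeta> n z =
      (\<Sum>k\<le>n. ((if k = 0 then 0 else ?q (k - 1)) - \<zeta> * ?q k) * z ^ k)"
    using linear_factor_times_sum[of z \<zeta> ?q n]
    by (simp add: fejer_quotient_def fejer_quotient_coeff_last lessThan_Suc_atMost)
  moreover have "(\<Sum>k\<le>n. (1 - of_nat k / of_nat (n + 1)) * A k * z ^ k) =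
      (\<Sum>k\<le>n. ((if k = 0 then 0 else ?q (k - 1)) - \<zeta> * ?q k) * z ^ k
              + (if k = 0 then A 0 + \<zeta> * ?q 0 else 0))"
    using fejer_quotient_coeff_step[of _ n b \<zeta>] A by (intro sum.cong refl) auto
  ultimately show ?thesis
    by (simp add: sum.distrib)
qed

definition fejer_weight :: "nat \<Rightarrow> nat \<Rightarrow> real" where
  "fejer_weight n j =
     (if j \<le> n then 2 * (real j / real (n + 1))\<^sup>2 + 2 * (real j + 1) / real (n + 1) else 1)"

lemma norm_fejer_tail_le:
  assumes "cmod \<zeta> \<le> 1"
  shows "(cmod (fejer_tail b \<zeta> n j))\<^sup>2 \<le> real (n + 1) * (\<Sum>i\<in>{j..n}. (cmod (b i))\<^sup>2)"
proof -
  have "cmod (fejer_tail b \<zeta> n j) \<le> (\<Sum>i\<in>{j..n}. cmod (b i * \<zeta> ^ (i - j)))"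
    unfolding fejer_tail_def by (rule norm_sum)
  also have "\<dots> \<le> (\<Sum>i\<in>{j..n}. cmod (b i))"
    using assms by (intro sum_mono) (simp add: norm_mult norm_power mult_left_le power_le_one)
  finally have "(cmod (fejer_tail b \<zeta> n j))\<^sup>2 \<le> (\<Sum>i\<in>{j..n}. cmod (b i))\<^sup>2"
    by (intro power_mono) auto
  also have "\<dots> \<le> (\<Sum>i\<in>{j..n}. (cmod (b i))\<^sup>2) * card {j..n}"
    by (rule sum_squared_le_sum_of_squares)
  also have "\<dots> \<le> (\<Sum>i\<in>{j..n}. (cmod (b i))\<^sup>2) * real (n + 1)"
    by (intro mult_left_mono) (auto intro: sum_nonneg)
  finally show ?thesis
    by (simp add: mult.commute)
qed

lemma sum_sum_atLeastAtMost:
  fixes x :: "nat \<Rightarrow> real"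
  shows "(\<Sum>j\<le>n. \<Sum>i\<in>{j..n}. x i) = (\<Sum>i\<le>n. real (i + 1) * x i)"
proof (induction n)
  case (Suc n)
  have "(\<Sum>j\<le>Suc n. \<Sum>i\<in>{j..Suc n}. x i) = (\<Sum>j\<le>n. \<Sum>i\<in>{j..Suc n}. x i) + x (Suc n)"
    by simp
  also have "(\<Sum>j\<le>n. \<Sum>i\<in>{j..Suc n}. x i) = (\<Sum>j\<le>n. (\<Sum>i\<in>{j..n}. x i) + x (Suc n))"
    by (intro sum.cong refl) (simp add: atLeastAtMostSuc_conv)
  also have "\<dots> = (\<Sum>i\<le>n. real (i + 1) * x i) + real (n + 1) * x (Suc n)"
    using Suc by (simp add: sum.distrib)
  finally show ?case
    by (simp add: algebra_simps)
qed simp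

lemma norm_fejer_quotient_coeff_diff_le:
  "(cmod (fejer_quotient_coeff b \<zeta> n j - b j))\<^sup>2
     \<le> 2 * (real j / real (n + 1))\<^sup>2 * (cmod (b j))\<^sup>2
       + 2 * (cmod (fejer_tail b \<zeta> n j))\<^sup>2 / (real (n + 1))\<^sup>2"
proof -
  define u where "u = cmod (of_nat j / of_nat (n + 1) * b j)"
  define v where "v = cmod (fejer_tail b \<zeta> n j / of_nat (n + 1))"
  have "fejer_quotient_coeff b \<zeta> n j - b j
      = - (of_nat j / of_nat (n + 1) * b j) + - (fejer_tail b \<zeta> n j / of_nat (n + 1))"
    unfolding fejer_quotient_coeff_def by (simp add: algebra_simps)
  then have "cmod (fejer_quotient_coeff b \<zeta> n j - b j) \<le> u + v"
    unfolding u_def v_def by (metis norm_minus_cancel norm_triangle_ineq)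
  then have "(cmod (fejer_quotient_coeff b \<zeta> n j - b j))\<^sup>2 \<le> (u + v)\<^sup>2"
    by (intro power_mono) auto
  also have "\<dots> \<le> 2 * u\<^sup>2 + 2 * v\<^sup>2"
    using zero_le_power2[of "u - v"] by (simp add: power2_diff power2_sum)
  also have "u = real j / real (n + 1) * cmod (b j)"
    unfolding u_def by (simp add: norm_mult norm_divide del: of_nat_Suc)
  also have "v = cmod (fejer_tail b \<zeta> n j) / real (n + 1)"
    unfolding v_def by (simp add: norm_divide del: of_nat_Suc)
  finally show ?thesis
    by (simp add: power_mult_distrib power_divide)
qed

lemma sum_norm_fejer_quotient_coeff_diff_le:
  assumes "cmod \<zeta> \<le> 1"
  shows "(\<Sum>j\<le>n. (cmod (fejer_quotient_coeff b \<zeta> n j - b j))\<^sup>2)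
       \<le> (\<Sum>j\<le>n. fejer_weight n j * (cmod (b j))\<^sup>2)"
proof -
  let ?N = "real (n + 1)"
  have "(\<Sum>j\<le>n. 2 * (cmod (fejer_tail b \<zeta> n j))\<^sup>2 / ?N\<^sup>2)
      \<le> (\<Sum>j\<le>n. 2 / ?N * (\<Sum>i\<in>{j..n}. (cmod (b i))\<^sup>2))"
  proof (intro sum_mono)
    fix j
    have "2 * (cmod (fejer_tail b \<zeta> n j))\<^sup>2 / ?N\<^sup>2 \<le> 2 * (?N * (\<Sum>i\<in>{j..n}. (cmod (b i))\<^sup>2)) / ?N\<^sup>2"
      using norm_fejer_tail_le[OF assms] by (intro divide_right_mono mult_left_mono) auto
    then show "2 * (cmod (fejer_tail b \<zeta> n j))\<^sup>2 / ?N\<^sup>2 \<le> 2 / ?N * (\<Sum>i\<in>{j..n}. (cmod (b i))\<^sup>2)"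
      by (simp add: power2_eq_square)
  qed
  also have "\<dots> = (\<Sum>j\<le>n. 2 * (real j + 1) / ?N * (cmod (b j))\<^sup>2)"
    by (simp only: sum_distrib_left[symmetric] sum_sum_atLeastAtMost)
      (simp add: sum_distrib_left algebra_simps add_divide_distrib)
  finally have "(\<Sum>j\<le>n. 2 * (cmod (fejer_tail b \<zeta> n j))\<^sup>2 / ?N\<^sup>2)
      \<le> (\<Sum>j\<le>n. 2 * (real j + 1) / ?N * (cmod (b j))\<^sup>2)" .
  moreover have "(\<Sum>j\<le>n. (cmod (fejer_quotient_coeff b \<zeta> n j - b j))\<^sup>2)
      \<le> (\<Sum>j\<le>n. 2 * (real j / ?N)\<^sup>2 * (cmod (b j))\<^sup>2)
         + (\<Sum>j\<le>n. 2 * (cmod (fejer_tail b \<zeta> n j))\<^sup>2 / ?N\<^sup>2)"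
    unfolding sum.distrib[symmetric] by (intro sum_mono norm_fejer_quotient_coeff_diff_le)
  moreover have "(\<Sum>j\<le>n. fejer_weight n j * (cmod (b j))\<^sup>2)
      = (\<Sum>j\<le>n. 2 * (real j / ?N)\<^sup>2 * (cmod (b j))\<^sup>2)
        + (\<Sum>j\<le>n. 2 * (real j + 1) / ?N * (cmod (b j))\<^sup>2)"
    unfolding sum.distrib[symmetric] by (intro sum.cong refl) (simp add: fejer_weight_def algebra_simps)
  ultimately show ?thesis
    by linarith
qed

lemma hardy_fejer_quotient_error_le:
  assumes "cmod \<zeta> \<le> 1"
  shows "(\<Sum>j. ennreal ((cmod ((if j \<le> n then fejer_quotient_coeff b \<zeta> n j else 0) - b j))\<^sup>2))
       \<le> (\<Sum>j. ennreal (fejer_weight n j * (cmod (b j))\<^sup>2))"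
    (is "suminf ?e \<le> suminf ?w")
proof -
  have split: "suminf X = (\<Sum>j\<le>n. X j) + (\<Sum>j. if j \<le> n then 0 else X j)"
    for X :: "nat \<Rightarrow> ennreal"
  proof -
    have "suminf X = (\<Sum>j. (if j \<le> n then X j else 0) + (if j \<le> n then 0 else X j))"
      by (intro suminf_cong) simp
    also have "\<dots> = (\<Sum>j. if j \<le> n then X j else 0) + (\<Sum>j. if j \<le> n then 0 else X j)"
      by (intro suminf_add[symmetric] summableI)
    also have "(\<Sum>j. if j \<le> n then X j else 0) = (\<Sum>j\<le>n. X j)"
      by (subst suminf_finite[of "{..n}"]) auto
    finally show ?thesis .
  qed
  have "(\<Sum>j\<le>n. ?e j) = ennreal (\<Sum>j\<le>n. (cmod (fejer_quotient_coeff b \<zeta> n j - b j))\<^sup>2)"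
    by simp
  also have "\<dots> \<le> ennreal (\<Sum>j\<le>n. fejer_weight n j * (cmod (b j))\<^sup>2)"
    using sum_norm_fejer_quotient_coeff_diff_le[OF assms] by (rule ennreal_leI)
  also have "\<dots> = (\<Sum>j\<le>n. ?w j)"
    by (simp add: fejer_weight_def)
  finally have head: "(\<Sum>j\<le>n. ?e j) \<le> (\<Sum>j\<le>n. ?w j)" .
  have tail: "(\<Sum>j. if j \<le> n then 0 else ?e j) = (\<Sum>j. if j \<le> n then 0 else ?w j)"
    by (intro suminf_cong) (simp add: fejer_weight_def)
  show ?thesis
    unfolding split[of ?e] split[of ?w] tail by (rule add_right_mono[OF head])
qed

lemma fejer_weight_le_4: "fejer_weight n j \<le> 4"
proof (cases "j \<le> n")
  case True
  then have "real j / real (n + 1) \<le> 1" "2 * (real j + 1) / real (n + 1) \<le> 2"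
    by (simp_all add: field_simps)
  moreover from this(1) have "(real j / real (n + 1))\<^sup>2 \<le> 1"
    by (simp add: power_le_one)
  ultimately show ?thesis
    using True by (simp add: fejer_weight_def)
qed (simp add: fejer_weight_def)

lemma ennreal_fejer_weight_mult_le:
  "ennreal (fejer_weight n j * x\<^sup>2) \<le> 4 * ennreal (x\<^sup>2)"
proof -
  have "ennreal (fejer_weight n j * x\<^sup>2) \<le> ennreal (4 * x\<^sup>2)"
    using fejer_weight_le_4 by (intro ennreal_leI mult_right_mono) auto
  also have "\<dots> = 4 * ennreal (x\<^sup>2)"
    by (simp add: ennreal_mult)
  finally show ?thesis .
qed

lemma fejer_weight_tendsto_0: "(\<lambda>n. fejer_weight n j) \<longlonglongrightarrow> 0"
proof -
  have "(\<lambda>n. 2 * (real j * inverse (real (Suc n)))\<^sup>2 + 2 * (real j + 1) * inverse (real (Suc n)))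
        \<longlonglongrightarrow> 2 * (real j * 0)\<^sup>2 + 2 * (real j + 1) * 0"
    by (intro tendsto_intros LIMSEQ_inverse_real_of_nat)
  moreover have "\<forall>\<^sub>F n in sequentially. 2 * (real j * inverse (real (Suc n)))\<^sup>2
      + 2 * (real j + 1) * inverse (real (Suc n)) = fejer_weight n j"
    using eventually_ge_at_top[of j] by eventually_elim (simp add: fejer_weight_def divide_inverse)
  ultimately show ?thesis
    by (simp add: Lim_transform_eventually)
qed

lemma fejer_weighted_sum_le:
  "(\<Sum>j. ennreal (fejer_weight n j * (cmod (b j))\<^sup>2)) \<le> 4 * (\<Sum>j. ennreal ((cmod (b j))\<^sup>2))"
proof -
  have "(\<Sum>j. ennreal (fejer_weight n j * (cmod (b j))\<^sup>2)) \<le> (\<Sum>j. 4 * ennreal ((cmod (b j))\<^sup>2))"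
    by (intro suminf_le summableI ennreal_fejer_weight_mult_le)
  also have "\<dots> = 4 * (\<Sum>j. ennreal ((cmod (b j))\<^sup>2))"
    by (rule ennreal_suminf_cmult)
  finally show ?thesis .
qed

lemma fejer_weighted_sum_tendsto_0:
  assumes "(\<Sum>j. ennreal ((cmod (b j))\<^sup>2)) < \<infinity>"
  shows "(\<lambda>n. \<Sum>j. ennreal (fejer_weight n j * (cmod (b j))\<^sup>2)) \<longlonglongrightarrow> 0"
proof -
  have "(\<lambda>n. \<integral>\<^sup>+j. ennreal (fejer_weight n j * (cmod (b j))\<^sup>2) \<partial>count_space UNIV) \<longlonglongrightarrow> 0"
  proof (rule nn_integral_dominated_convergence_0_nonmeasurable)
    show "(\<integral>\<^sup>+j. 4 * ennreal ((cmod (b j))\<^sup>2) \<partial>count_space UNIV) < \<infinity>"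
      using assms by (simp add: nn_integral_count_space_nat ennreal_mult_less_top)
    show "ennreal (fejer_weight n j * (cmod (b j))\<^sup>2) \<le> 4 * ennreal ((cmod (b j))\<^sup>2)" for n j
      by (rule ennreal_fejer_weight_mult_le)
    have "(\<lambda>n. fejer_weight n j * (cmod (b j))\<^sup>2) \<longlonglongrightarrow> 0 * (cmod (b j))\<^sup>2" for j
      by (intro tendsto_mult fejer_weight_tendsto_0 tendsto_const)
    then show "(\<lambda>n. ennreal (fejer_weight n j * (cmod (b j))\<^sup>2)) \<longlonglongrightarrow> 0" for j
      by (simp add: tendsto_ennrealI[where x=0, simplified])
  qed
  then show ?thesis
    by (simp add: nn_integral_count_space_nat)
qed

lemma le_mult_INF_ennreal:
  fixes c x :: ennreal
  assumes "c \<noteq> 0" "c \<noteq> \<infinity>" and le: "\<And>g. g \<in> A \<Longrightarrow> x \<le> c * h g"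
  shows "x \<le> c * (INF g\<in>A. h g)"
proof -
  have "x / c \<le> (INF g\<in>A. h g)"
  proof (rule INF_greatest)
    fix g assume "g \<in> A"
    then have "x / c \<le> (c * h g) / c"
      using le by (intro divide_right_mono_ennreal) auto
    also have "\<dots> = h g"
      using assms(1,2) by (simp add: mult.commute[of c] ennreal_mult_divide_eq)
    finally show "x / c \<le> h g" .
  qed
  then have "c * (x / c) \<le> c * (INF g\<in>A. h g)"
    by (rule mult_left_mono) simp
  also have "c * (x / c) = x"
    using assms(1,2) by (simp add: ennreal_times_divide mult.commute[of c] ennreal_mult_divide_eq)
  finally show ?thesis .
qed

lemma fejer_mean_minus_eq:
  assumes f: "f holomorphic_on ball 0 1" and g: "g holomorphic_on ball 0 1"
    and eq: "\<forall>z\<in>ball 0 1. f z = a + (z - \<zeta>) * g z" and z: "z \<in> ball 0 1"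
  shows "fejer_mean n f z - f z
       = (taylor_coeff f 0 + \<zeta> * fejer_quotient_coeff (taylor_coeff g) \<zeta> n 0 - a)
         + (z - \<zeta>) * (fejer_quotient (taylor_coeff g) \<zeta> n z - g z)"
proof -
  have fe: "fejer_mean n f z = (taylor_coeff f 0 + \<zeta> * fejer_quotient_coeff (taylor_coeff g) \<zeta> n 0)
      + (z - \<zeta>) * fejer_quotient (taylor_coeff g) \<zeta> n z"
    unfolding fejer_mean_def
    by (rule fejer_sum_factorization[where a = a]) (simp add: taylor_coeff_linear_factor[OF f g eq])
  have fz: "f z = a + (z - \<zeta>) * g z"
    using eq z by blast
  show ?thesis
    unfolding fe fz by (simp add: algebra_simps)
qed

lemma hardy_norm2_fejer_quotient_minus_le:
  assumes g: "g holomorphic_on ball 0 1" and \<zeta>: "cmod \<zeta> \<le> 1"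
  shows "hardy_norm2 (\<lambda>z. fejer_quotient (taylor_coeff g) \<zeta> n z - g z)
       \<le> (\<Sum>j. ennreal (fejer_weight n j * (cmod (taylor_coeff g j))\<^sup>2))"
proof -
  let ?Q = "fejer_quotient (taylor_coeff g) \<zeta> n"
  have Q: "?Q holomorphic_on ball 0 1"
    unfolding fejer_quotient_def by (auto intro!: holomorphic_intros)
  have "taylor_coeff ?Q j = (if j \<le> n then fejer_quotient_coeff (taylor_coeff g) \<zeta> n j else 0)" for j
    unfolding fejer_quotient_def[abs_def] by (rule taylor_coeff_polynomial)
  then have "hardy_norm2 (\<lambda>z. ?Q z - g z) = (\<Sum>j. ennreal ((cmod
      ((if j \<le> n then fejer_quotient_coeff (taylor_coeff g) \<zeta> n j else 0) - taylor_coeff g j))\<^sup>2))"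
    by (simp add: hardy_norm2_def taylor_coeff_diff[OF Q g])
  also have "\<dots> \<le> (\<Sum>j. ennreal (fejer_weight n j * (cmod (taylor_coeff g j))\<^sup>2))"
    by (rule hardy_fejer_quotient_error_le[OF \<zeta>])
  finally show ?thesis .
qed

lemma local_dirichlet_fejer_error_le:
  assumes f: "f holomorphic_on ball 0 1" and g: "g \<in> H2"
    and eq: "\<forall>z\<in>ball 0 1. f z = a + (z - \<zeta>) * g z" and \<zeta>: "cmod \<zeta> \<le> 1"
  shows "local_dirichlet \<zeta> (\<lambda>z. fejer_mean n f z - f z)
       \<le> (\<Sum>j. ennreal (fejer_weight n j * (cmod (taylor_coeff g j))\<^sup>2))"
proof -
  let ?Q = "fejer_quotient (taylor_coeff g) \<zeta> n"
  have g_holo: "g holomorphic_on ball 0 1" and "hardy_norm2 g < \<infinity>"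
    using g by (auto simp: H2_def)
  note Q_err = hardy_norm2_fejer_quotient_minus_le[OF g_holo \<zeta>, of n]
  also have "(\<Sum>j. ennreal (fejer_weight n j * (cmod (taylor_coeff g j))\<^sup>2)) \<le> 4 * hardy_norm2 g"
    unfolding hardy_norm2_def by (rule fejer_weighted_sum_le)
  also have "\<dots> < \<infinity>"
    using \<open>hardy_norm2 g < \<infinity>\<close> by (simp add: ennreal_mult_less_top)
  finally have "(\<lambda>z. ?Q z - g z) \<in> H2"
    using g_holo unfolding H2_def fejer_quotient_def by (auto intro!: holomorphic_intros)
  then have "local_dirichlet \<zeta> (\<lambda>z. fejer_mean n f z - f z) \<le> hardy_norm2 (\<lambda>z. ?Q z - g z)"
    unfolding local_dirichlet_def using fejer_mean_minus_eq[OF f g_holo eq] by (intro INF_lower) blast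
  with Q_err show ?thesis
    by order
qed

lemma local_dirichlet_fejer_error_le_4:
  assumes "f holomorphic_on ball 0 1" "cmod \<zeta> \<le> 1"
  shows "local_dirichlet \<zeta> (\<lambda>z. fejer_mean n f z - f z) \<le> 4 * local_dirichlet \<zeta> f"
  unfolding local_dirichlet_def[of \<zeta> f]
proof (rule le_mult_INF_ennreal)
  fix g assume "g \<in> {g \<in> H2. \<exists>a. \<forall>z\<in>ball 0 1. f z = a + (z - \<zeta>) * g z}"
  then obtain a where "g \<in> H2" "\<forall>z\<in>ball 0 1. f z = a + (z - \<zeta>) * g z"
    by blast
  from local_dirichlet_fejer_error_le[OF assms(1) this assms(2)]
  show "local_dirichlet \<zeta> (\<lambda>z. fejer_mean n f z - f z) \<le> 4 * hardy_norm2 g"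
    unfolding hardy_norm2_def using fejer_weighted_sum_le order.trans by blast
qed auto

lemma local_dirichlet_fejer_error_tendsto_0:
  assumes "f holomorphic_on ball 0 1" "cmod \<zeta> \<le> 1" "local_dirichlet \<zeta> f < \<infinity>"
  shows "(\<lambda>n. local_dirichlet \<zeta> (\<lambda>z. fejer_mean n f z - f z)) \<longlonglongrightarrow> 0"
proof -
  have "{g \<in> H2. \<exists>a. \<forall>z\<in>ball 0 1. f z = a + (z - \<zeta>) * g z} \<noteq> {}"
  proof
    assume empty: "{g \<in> H2. \<exists>a. \<forall>z\<in>ball 0 1. f z = a + (z - \<zeta>) * g z} = {}"
    have "local_dirichlet \<zeta> f = \<infinity>"
      unfolding local_dirichlet_def empty by simp
    with assms(3) show False
      by simp
  qed
  then obtain g a where g: "g \<in> H2" and eq: "\<forall>z\<in>ball 0 1. f z = a + (z - \<zeta>) * g z"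
    by blast
  then have g_fin: "(\<Sum>j. ennreal ((cmod (taylor_coeff g j))\<^sup>2)) < \<infinity>"
    by (simp add: H2_def hardy_norm2_def)
  show ?thesis
    by (rule tendsto_sandwich[OF _ _ tendsto_const fejer_weighted_sum_tendsto_0[OF g_fin]])
      (use local_dirichlet_fejer_error_le[OF assms(1) g eq assms(2)] in \<open>auto intro: always_eventually\<close>)
qed

lemma fejer_mean_at_0: "fejer_mean n f 0 = f 0"
proof -
  have "fejer_mean n f 0 = (\<Sum>k\<le>n. if k = 0 then f 0 else 0)"
    unfolding fejer_mean_def by (intro sum.cong refl) (auto simp: taylor_coeff_def)
  then show ?thesis
    by simp
qed

theorem mainTheorem2:
  fixes \<mu> :: "complex measure" and f :: "complex \<Rightarrow> complex"
  assumes "finite_measure \<mu>"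
    and "sets \<mu> = sets (restrict_space borel (cball 0 1))"
    and "f holomorphic_on ball 0 1"
    and "dirichlet_mu \<mu> f < \<infinity>"
  shows "(\<lambda>n. Dmu_norm2 \<mu> (\<lambda>z. fejer_mean n f z - f z)) \<longlonglongrightarrow> 0"
proof -
  have space: "space \<mu> = cball 0 1"
    using sets_eq_imp_space_eq[OF assms(2)] by (simp add: space_restrict_space)
  have "(\<integral>\<^sup>+\<zeta>. 4 * local_dirichlet \<zeta> f \<partial>\<mu>) \<le> 4 * dirichlet_mu \<mu> f"
    unfolding dirichlet_mu_def by (rule nn_integral_cmult_le) simp
  also have "\<dots> < \<infinity>"
    using assms(4) by (simp add: ennreal_mult_less_top)
  finally have "(\<integral>\<^sup>+\<zeta>. 4 * local_dirichlet \<zeta> f \<partial>\<mu>) < \<infinity>" .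
  then have "(\<lambda>n. \<integral>\<^sup>+\<zeta>. local_dirichlet \<zeta> (\<lambda>z. fejer_mean n f z - f z) \<partial>\<mu>) \<longlonglongrightarrow> 0"
  proof (rule nn_integral_dominated_convergence_0_nonmeasurable)
    fix \<zeta> assume "\<zeta> \<in> space \<mu>"
    then have "cmod \<zeta> \<le> 1"
      by (simp add: space)
    then show "local_dirichlet \<zeta> (\<lambda>z. fejer_mean n f z - f z) \<le> 4 * local_dirichlet \<zeta> f" for n
      by (rule local_dirichlet_fejer_error_le_4[OF assms(3)])
    assume "4 * local_dirichlet \<zeta> f < \<infinity>"
    then show "(\<lambda>n. local_dirichlet \<zeta> (\<lambda>z. fejer_mean n f z - f z)) \<longlonglongrightarrow> 0"
      using \<open>cmod \<zeta> \<le> 1\<close> by (intro local_dirichlet_fejer_error_tendsto_0[OF assms(3)]) (auto simp: ennreal_mult_less_top)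
  qed
  then show ?thesis
    by (simp add: Dmu_norm2_def dirichlet_mu_def fejer_mean_at_0)
qed

end
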